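(* Let $d>0$, let $J$ satisfy (J) and (J2), let $f$ satisfy (f3), and let $c_*$ be the minimal traveling wave speed. Let $0<c_1<c_2<c_*$, and for $i=1,2$ and $\sigma\in(0,1)$ let $\phi_\sigma^i$ denote the solution obtained from the iteration process described in the context with $c=c_i$. Then there exists $\delta_0\in(0,1]$ such that $\phi_\sigma^1\ge\phi_\sigma^2$ on $\mathbb{R}$ for all $\sigma\in(0,\delta_0)$.
   Context: Condition (J): $J\in C(\mathbb{R})\cap L^\infty(\mathbb{R})$, $J\ge 0$, $J(0)>0$, $\int_{\mathbb{R}}J=1$, $J$ even. Condition (J2): there exists $\lambda>0$ with $\int_{\mathbb{R}}J(x)e^{\lambda x}dx<\infty$. Condition (f3): $f\in C^1([0,\infty))$, $f(0)=f(1)=0$, $f>0$ in $(0,1)$, $f'(0)>0>f'(1)$, $f(u)/u$ nonincreasing in $u>0$. Known fact: under (J), (J2), (f3) there is $c_*>0$ such that $d\int_{\mathbb{R}}J(x-y)\phi(y)dy-d\phi(x)+c\phi'(x)+f(\phi(x))=0$ on $\mathbb{R}$, $\phi(-\infty)=1$, $\phi(+\infty)=0$, has a nonincreasing bounded solution iff $c\ge c_*$. Iteration process (for given $c\in(0,c_* )$ and $\sigma\in(0,1)$): choose $M>0$ such that $\tilde f(u):=(cM-d)u+f(u)$ is increasing on $[0,1]$; $a(x)=\int_{-\infty}^xJ(y)dy$; define $A_c[\phi](x)=\sigma$ for $x\ge0$ and for $x<0$ $A_c[\phi](x)=e^{Mx}\sigma+\frac{e^{Mx}}{c}\int_x^0e^{-M\xi}\big[d\int_{-\infty}^0J(\xi-y)\phi(y)dy+d\sigma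 a(\xi)+\tilde f(\phi(\xi))\big]d\xi$. Let $\phi_*$ be a nonincreasing traveling wave of speed $c_*$ translated so $\phi_*(0)=\sigma$, and $\phi_*^\sigma=\max\{\phi_*,\sigma\}$. The solution is $\phi_\sigma=\lim_{n\to\infty}A_c^n[\phi_*^\sigma]$; it solves $d\int_{\mathbb{R}}J(x-y)\phi(y)dy-d\phi+c\phi'+f(\phi)=0$ for $x<0$, $\phi(-\infty)=1$, $\phi=\sigma$ on $[0,\infty)$. *)

theory Defs
  imports "HOL-Analysis.Analysis"
begin

definition cond_J :: "(real \<Rightarrow> real) \<Rightarrow> bool" where
  "cond_J J \<longleftrightarrow> continuous_on UNIV J \<and> bounded (range J) \<and> (\<forall>x. J x \<ge> 0) \<and> J 0 > 0
     \<and> integrable lborel J \<and> (\<integral>x. J x \<partial>lborel) = 1 \<and> (\<forall>x. J (- x) = J x)"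

definition cond_J2 :: "(real \<Rightarrow> real) \<Rightarrow> bool" where
  "cond_J2 J \<longleftrightarrow> (\<exists>lam>0. integrable lborel (\<lambda>x. J x * exp (lam * x)))"

definition cond_f3 :: "(real \<Rightarrow> real) \<Rightarrow> bool" where
  "cond_f3 f \<longleftrightarrow>
     (\<exists>f'. continuous_on {0..} f' \<and> (\<forall>u\<ge>0. (f has_real_derivative f' u) (at u within {0..}))
           \<and> f' 0 > 0 \<and> f' 1 < 0)
     \<and> f 0 = 0 \<and> f 1 = 0 \<and> (\<forall>u. 0 < u \<and> u < 1 \<longrightarrow> f u > 0)
     \<and> (\<forall>u v. 0 < u \<and> u \<le> v \<longrightarrow> f v / v \<le> f u / u)"

definition is_TW :: "real \<Rightarrow> (real \<Rightarrow> real) \<Rightarrow> (real \<Rightarrow> real) \<Rightarrow> real \<Rightarrow> (real \<Rightarrow> real) \<Rightarrow> bool" where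
  "is_TW d J f c \<phi> \<longleftrightarrow> antimono \<phi> \<and> bounded (range \<phi>)
     \<and> (\<exists>\<phi>'. \<forall>x. (\<phi> has_real_derivative \<phi>' x) (at x)
          \<and> d * (\<integral>y. J (x - y) * \<phi> y \<partial>lborel) - d * \<phi> x + c * \<phi>' x + f (\<phi> x) = 0)
     \<and> (\<phi> \<longlongrightarrow> 1) at_bot \<and> (\<phi> \<longlongrightarrow> 0) at_top"

text \<open>Minimal wave speed c_* (the known fact says the set of admissible speeds is [c_*,oo)).\<close>
definition cstar :: "real \<Rightarrow> (real \<Rightarrow> real) \<Rightarrow> (real \<Rightarrow> real) \<Rightarrow> real" where
  "cstar d J f = Inf {c. \<exists>\<phi>. is_TW d J f c \<phi>}"

definition acum :: "(real \<Rightarrow> real) \<Rightarrow> real \<Rightarrow> real" where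
  "acum J x = (LINT y:{..x}|lborel. J y)"

definition ftilde :: "real \<Rightarrow> (real \<Rightarrow> real) \<Rightarrow> real \<Rightarrow> real \<Rightarrow> real \<Rightarrow> real" where
  "ftilde d f c M u = (c * M - d) * u + f u"

definition Aop :: "real \<Rightarrow> (real \<Rightarrow> real) \<Rightarrow> (real \<Rightarrow> real) \<Rightarrow> real \<Rightarrow> real \<Rightarrow> real
                   \<Rightarrow> (real \<Rightarrow> real) \<Rightarrow> real \<Rightarrow> real" where
  "Aop d J f c M \<sigma> \<phi> x =
     (if x \<ge> 0 then \<sigma>
      else exp (M * x) * \<sigma> + exp (M * x) / c *
        (LINT \<xi>:{x..0}|lborel. exp (- M * \<xi>) *
            (d * (LINT y:{..0}|lborel. J (\<xi> - y) * \<phi> y) + d * \<sigma> * acum J \<xi>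
             + ftilde d f c M (\<phi> \<xi>))))"

definition phi_iter :: "real \<Rightarrow> (real \<Rightarrow> real) \<Rightarrow> (real \<Rightarrow> real) \<Rightarrow> real \<Rightarrow> real \<Rightarrow> real
                   \<Rightarrow> (real \<Rightarrow> real) \<Rightarrow> real \<Rightarrow> real" where
  "phi_iter d J f c M \<sigma> \<phi>s x =
     lim (\<lambda>n. ((Aop d J f c M \<sigma>) ^^ n) (\<lambda>y. max (\<phi>s y) \<sigma>) x)"

end

theory Submission
  imports Defs
begin

text \<open>
  Continue \<phi> by \<sigma> on (0,\<infinity>) and put H[\<phi>] = d J * \<phi> + ftilde(\<phi>) (\<open>source\<close> below);
  then A_c[\<phi>](x) = e^(Mx) \<sigma> + e^(Mx)/c \<integral>_x^0 e^(-M\<xi>) H[\<phi>](\<xi>) d\<xi>, which is monotone in \<phi>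
  because ftilde is increasing. Since \<integral>_x^0 e^(-M\<xi>) (M\<psi> - \<psi>') = e^(-Mx) \<psi>(x) - \<psi>(0), a C^1
  function \<psi> with H[\<phi>] \<le> c (M\<psi> - \<psi>') on (x,0) gives A_c[\<phi>](x) \<le> \<psi>(x) + e^(Mx) (\<sigma> - \<psi>(0)),
  and symmetrically from below. For \<phi> = \<psi> \<ge> \<sigma> this says that supersolutions of the equation
  with speed c satisfy A_c[\<psi>] \<le> \<psi>.

  As \<phi>_*' \<le> 0 and c < c_*, the start max(\<phi>_*, \<sigma>) is a subsolution, so the iterates increase
  to a fixed point \<phi>_\<sigma>. It is C^1 on (-\<infinity>,0), solves the equation there, lies below every
  supersolution above the start, and is nonincreasing because its translates are such
  supersolutions. Finally (\<phi>^1_\<sigma>)' \<le> 0 and c_1 < c_2 make \<phi>^1_\<sigma> a supersolution for the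
  speed c_2, whence \<phi>^2_\<sigma> \<le> \<phi>^1_\<sigma>. This holds for every \<sigma> \<in> (0,1), so \<delta>_0 = 1.
\<close>

lemma antimono_has_real_derivative_nonpos:
  fixes g :: "real \<Rightarrow> real"
  assumes "antimono g" "(g has_real_derivative l) (at x)"
  shows "l \<le> 0"
proof (rule ccontr)
  assume "\<not> l \<le> 0"
  then obtain e where "e > 0" "\<And>h. 0 < h \<Longrightarrow> h < e \<Longrightarrow> g (x - h) < g x"
    using DERIV_pos_inc_left[OF assms(2)] by force
  then have "g (x - e / 2) < g x" by simp
  moreover have "g x \<le> g (x - e / 2)" using assms(1) \<open>e > 0\<close> by (simp add: antimono_def)
  ultimately show False by simp
qed

lemma exp_weighted_derivative_integral:
  fixes M a b :: real
  assumes "a \<le> b" and \<psi>: "continuous_on {a..b} \<psi>" "continuous_on {a..b} \<psi>'"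
    and deriv: "\<And>\<xi>. a < \<xi> \<Longrightarrow> \<xi> < b \<Longrightarrow> (\<psi> has_real_derivative \<psi>' \<xi>) (at \<xi>)"
  shows "set_integrable lborel {a..b} (\<lambda>\<xi>. exp (- M * \<xi>) * (M * \<psi> \<xi> - \<psi>' \<xi>))"
    and "(LINT \<xi>:{a..b}|lborel. exp (- M * \<xi>) * (M * \<psi> \<xi> - \<psi>' \<xi>))
           = exp (- M * a) * \<psi> a - exp (- M * b) * \<psi> b"
proof -
  let ?g = "\<lambda>\<xi>. exp (- M * \<xi>) * (M * \<psi> \<xi> - \<psi>' \<xi>)"
  show integrable: "set_integrable lborel {a..b} ?g"
    unfolding set_integrable_def by (intro borel_integrable_compact compact_Icc continuous_intros \<psi>)
  have "(?g has_integral (- exp (- M * b) * \<psi> b - - exp (- M * a) * \<psi> a)) {a..b}"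
  proof (rule fundamental_theorem_of_calculus_interior[OF \<open>a \<le> b\<close>])
    show "continuous_on {a..b} (\<lambda>\<xi>. - exp (- M * \<xi>) * \<psi> \<xi>)" by (intro continuous_intros \<psi>)
    show "((\<lambda>\<xi>. - exp (- M * \<xi>) * \<psi> \<xi>) has_vector_derivative ?g \<xi>) (at \<xi>)" if "\<xi> \<in> {a<..<b}" for \<xi>
      using deriv[of \<xi>] that
      by (auto intro!: derivative_eq_intros
          simp: has_real_derivative_iff_has_vector_derivative[symmetric] algebra_simps)
  qed
  then show "(LINT \<xi>:{a..b}|lborel. ?g \<xi>) = exp (- M * a) * \<psi> a - exp (- M * b) * \<psi> b"
    using set_borel_integral_eq_integral(2)[OF integrable] by (simp add: integral_unique)
qed

lemma is_TW_bounds: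
  assumes "is_TW d J f cs \<psi>"
  shows "0 \<le> \<psi> x" and "\<psi> x \<le> 1"
proof -
  have anti: "antimono \<psi>" and "(\<psi> \<longlongrightarrow> 0) at_top" "(\<psi> \<longlongrightarrow> 1) at_bot"
    using assms by (auto simp: is_TW_def)
  have "eventually (\<lambda>y. \<psi> y \<le> \<psi> x) at_top"
    using eventually_ge_at_top[of x] by eventually_elim (use anti in \<open>auto simp: antimono_def\<close>)
  then show "0 \<le> \<psi> x"
    using tendsto_le[OF trivial_limit_at_top_linorder tendsto_const] \<open>(\<psi> \<longlongrightarrow> 0) at_top\<close>
    by blast
  have "eventually (\<lambda>y. \<psi> x \<le> \<psi> y) at_bot"
    using eventually_le_at_bot[of x] by eventually_elim (use anti in \<open>auto simp: antimono_def\<close>)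
  then show "\<psi> x \<le> 1"
    using tendsto_le[OF trivial_limit_at_bot_linorder _ tendsto_const] \<open>(\<psi> \<longlongrightarrow> 1) at_bot\<close>
    by blast
qed

lemma is_TW_continuous:
  assumes "is_TW d J f cs \<psi>" shows "continuous_on UNIV \<psi>"
proof -
  obtain \<psi>' where "\<And>x. (\<psi> has_real_derivative \<psi>' x) (at x)"
    using assms unfolding is_TW_def by blast
  then show ?thesis by (auto simp: continuous_on_eq_continuous_at intro: DERIV_isCont)
qed

section \<open>Convolution with a nonnegative kernel\<close>

definition conv :: "(real \<Rightarrow> real) \<Rightarrow> (real \<Rightarrow> real) \<Rightarrow> real \<Rightarrow> real" where
  "conv J g \<xi> = (\<integral>y. J (\<xi> - y) * g y \<partial>lborel)"

definition extend_right :: "real \<Rightarrow> (real \<Rightarrow> real) \<Rightarrow> real \<Rightarrow> real" where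
  "extend_right s \<phi> y = (if y \<le> 0 then \<phi> y else s)"

locale nonneg_kernel =
  fixes J :: "real \<Rightarrow> real"
  assumes J_nonneg: "\<And>x. 0 \<le> J x" and J_integrable: "integrable lborel J"
begin

lemma J_measurable [measurable]: "J \<in> borel_measurable borel"
  using J_integrable by auto

lemma integrable_J_reflect: "integrable lborel (\<lambda>y. J (\<xi> - y))"
  using lborel_integrable_real_affine_iff[of "-1" J \<xi>] J_integrable by simp

lemma abs_J_mult_le: "\<bar>g\<bar> \<le> B \<Longrightarrow> \<bar>J z * g\<bar> \<le> B * J z"
  using J_nonneg[of z] by (simp add: abs_mult mult.commute mult_right_mono)

lemma conv_integrable:
  assumes [measurable]: "g \<in> borel_measurable borel" and "\<And>y. \<bar>g y\<bar> \<le> B"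
  shows "integrable lborel (\<lambda>y. J (\<xi> - y) * g y)"
proof (rule Bochner_Integration.integrable_bound)
  show "integrable lborel (\<lambda>y. B * J (\<xi> - y))" using integrable_J_reflect by simp
  show "AE y in lborel. norm (J (\<xi> - y) * g y) \<le> norm (B * J (\<xi> - y))"
    using abs_J_mult_le[OF assms(2)] by (intro AE_I2) (metis abs_ge_self order_trans real_norm_def)
qed measurable

lemma conv_mono:
  assumes "g \<in> borel_measurable borel" "\<And>y. \<bar>g y\<bar> \<le> B"
    and "h \<in> borel_measurable borel" "\<And>y. \<bar>h y\<bar> \<le> B'"
    and "\<And>y. g y \<le> h y"
  shows "conv J g \<xi> \<le> conv J h \<xi>"
  unfolding conv_def
  by (rule integral_mono[OF conv_integrable[OF assms(1,2)] conv_integrable[OF assms(3,4)]])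
     (simp add: J_nonneg assms(5) mult_left_mono)

lemma conv_const:
  assumes "(\<integral>x. J x \<partial>lborel) = 1"
  shows "conv J (\<lambda>_. k) \<xi> = k"
  using lborel_integral_real_affine[of "-1" J \<xi>] assms by (simp add: conv_def)

lemma conv_translate: "conv J (\<lambda>y. g (y - h)) \<xi> = conv J g (\<xi> - h)"
  using lborel_integral_real_affine[of 1 "\<lambda>y. J (\<xi> - h - y) * g y" "-h"]
  by (simp add: conv_def algebra_simps)

lemma conv_measurable [measurable]:
  assumes [measurable]: "g \<in> borel_measurable borel"
  shows "conv J g \<in> borel_measurable borel"
  unfolding conv_def[abs_def] by measurable

lemma conv_tendsto:
  assumes [measurable]: "\<And>n. g n \<in> borel_measurable borel" "h \<in> borel_measurable borel"
    and bound: "\<And>n y. \<bar>g n y\<bar> \<le> B" and lim: "\<And>y. (\<lambda>n. g n y) \<longlonglongrightarrow> h y"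
  shows "(\<lambda>n. conv J (g n) \<xi>) \<longlonglongrightarrow> conv J h \<xi>"
  unfolding conv_def
proof (rule integral_dominated_convergence[where w="\<lambda>y. B * J (\<xi> - y)"])
  show "integrable lborel (\<lambda>y. B * J (\<xi> - y))" using integrable_J_reflect by simp
  show "AE y in lborel. (\<lambda>n. J (\<xi> - y) * g n y) \<longlonglongrightarrow> J (\<xi> - y) * h y"
    by (intro AE_I2 tendsto_mult tendsto_const lim)
  show "AE y in lborel. norm (J (\<xi> - y) * g n y) \<le> B * J (\<xi> - y)" for n
    using bound abs_J_mult_le by auto
qed measurable

lemma conv_continuous:
  assumes g: "continuous_on UNIV g" and bound: "\<And>y. \<bar>g y\<bar> \<le> B"
  shows "continuous_on UNIV (conv J g)"
proof (rule continuous_on_sequentiallyI)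
  have [measurable]: "g \<in> borel_measurable borel" using g by (rule borel_measurable_continuous_onI)
  have conv_eq: "conv J g \<xi> = (\<integral>z. J z * g (\<xi> - z) \<partial>lborel)" for \<xi>
    using lborel_integral_real_affine[of "-1" "\<lambda>y. J (\<xi> - y) * g y" \<xi>] by (simp add: conv_def)
  fix xs :: "nat \<Rightarrow> real" and a assume xs: "xs \<longlonglongrightarrow> a"
  have "(\<lambda>n. \<integral>z. J z * g (xs n - z) \<partial>lborel) \<longlonglongrightarrow> (\<integral>z. J z * g (a - z) \<partial>lborel)"
  proof (rule integral_dominated_convergence[where w="\<lambda>z. B * J z"])
    show "integrable lborel (\<lambda>z. B * J z)" using J_integrable by simp
    show "AE z in lborel. (\<lambda>n. J z * g (xs n - z)) \<longlonglongrightarrow> J z * g (a - z)"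
      using g xs by (intro AE_I2 tendsto_mult tendsto_const continuous_on_tendsto_compose[OF g])
        (auto intro!: tendsto_intros)
    show "AE z in lborel. norm (J z * g (xs n - z)) \<le> B * J z" for n
      using bound abs_J_mult_le by auto
  qed measurable
  then show "(\<lambda>n. conv J g (xs n)) \<longlonglongrightarrow> conv J g a" by (simp add: conv_eq)
qed

lemma acum_eq_integral_right: "acum J \<xi> = (\<integral>y. indicator {0<..} y * J (\<xi> - y) \<partial>lborel)"
proof -
  have "acum J \<xi> = (\<integral>y. indicator {..\<xi>} (\<xi> + -1 * y) * J (\<xi> + -1 * y) \<partial>lborel)"
    using lborel_integral_real_affine[of "-1" "\<lambda>y. indicator {..\<xi>} y * J y" \<xi>]
    by (simp add: acum_def set_lebesgue_integral_def)
  also have "\<dots> = (\<integral>y. indicator {0<..} y * J (\<xi> - y) \<partial>lborel)"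
    by (rule integral_cong_AE) (use AE_lborel_singleton[of 0] in \<open>auto simp: indicator_def\<close>)
  finally show ?thesis .
qed

lemma conv_extend_right:
  assumes [measurable]: "\<phi> \<in> borel_measurable borel" and "\<And>y. \<bar>\<phi> y\<bar> \<le> B"
  shows "conv J (extend_right s \<phi>) \<xi> = (LINT y:{..0}|lborel. J (\<xi> - y) * \<phi> y) + s * acum J \<xi>"
proof -
  have "integrable lborel (\<lambda>y. indicator {..0} y * (J (\<xi> - y) * \<phi> y))"
    using integrable_mult_indicator[OF _ conv_integrable[OF assms]] by simp
  moreover have "integrable lborel (\<lambda>y. indicator {0<..} y * J (\<xi> - y))"
    using integrable_mult_indicator[OF _ integrable_J_reflect] by simp
  moreover have "conv J (extend_right s \<phi>) \<xi>
      = (\<integral>y. indicator {..0} y * (J (\<xi> - y) * \<phi> y) + s * (indicator {0<..} y * J (\<xi> - y)) \<partial>lborel)"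
    unfolding conv_def extend_right_def
    by (rule Bochner_Integration.integral_cong) (auto simp: indicator_def)
  ultimately show ?thesis by (simp add: acum_eq_integral_right set_lebesgue_integral_def)
qed

end

lemma nonneg_kernel_if_cond_J: "cond_J J \<Longrightarrow> nonneg_kernel J"
  unfolding cond_J_def by unfold_locales auto

section \<open>The operator A_c\<close>

locale truncated_problem = nonneg_kernel J for J :: "real \<Rightarrow> real" +
  fixes d :: real and f :: "real \<Rightarrow> real" and c M \<sigma> :: real
  assumes d_pos: "0 < d" and J_mass: "(\<integral>x. J x \<partial>lborel) = 1"
    and f_continuous: "continuous_on {0..} f" and f_pos: "\<And>v. 0 < v \<Longrightarrow> v < 1 \<Longrightarrow> 0 < f v"
    and f_one: "f 1 = 0"
    and c_pos: "0 < c" and M_pos: "0 < M"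
    and ftilde_strict_mono: "strict_mono_on {0..1} (ftilde d f c M)"
    and sigma_pos: "0 < \<sigma>" and sigma_less_one: "\<sigma> < 1"
begin

abbreviation A :: "(real \<Rightarrow> real) \<Rightarrow> real \<Rightarrow> real" where
  "A \<equiv> Aop d J f c M \<sigma>"

definition admissible :: "(real \<Rightarrow> real) \<Rightarrow> bool" where
  "admissible \<phi> \<longleftrightarrow> \<phi> \<in> borel_measurable borel \<and> (\<forall>y. \<sigma> \<le> \<phi> y \<and> \<phi> y \<le> 1)"

lemma admissibleD:
  assumes "admissible \<phi>"
  shows "\<phi> \<in> borel_measurable borel" and "\<sigma> \<le> \<phi> y" and "\<phi> y \<le> 1" and "\<bar>\<phi> y\<bar> \<le> 1"
proof -
  show "\<phi> \<in> borel_measurable borel" "\<sigma> \<le> \<phi> y" "\<phi> y \<le> 1"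
    using assms unfolding admissible_def by auto
  then show "\<bar>\<phi> y\<bar> \<le> 1" using sigma_pos by simp
qed

lemma admissible_extend_right: "admissible \<phi> \<Longrightarrow> admissible (extend_right \<sigma> \<phi>)"
  using sigma_less_one unfolding admissible_def extend_right_def[abs_def] by auto

definition source :: "(real \<Rightarrow> real) \<Rightarrow> real \<Rightarrow> real" where
  "source \<phi> \<xi> = d * conv J (extend_right \<sigma> \<phi>) \<xi> + ftilde d f c M (\<phi> \<xi>)"

lemma ftilde_mono: "0 \<le> a \<Longrightarrow> a \<le> b \<Longrightarrow> b \<le> 1 \<Longrightarrow> ftilde d f c M a \<le> ftilde d f c M b"
  using ftilde_strict_mono by (cases "a = b") (auto simp: strict_mono_on_def less_imp_le)

lemma ftilde_bounds:
  assumes "\<sigma> \<le> v" "v \<le> 1"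
  shows "(c * M - d) * \<sigma> \<le> ftilde d f c M v" and "ftilde d f c M v \<le> c * M - d"
proof -
  have "(c * M - d) * \<sigma> \<le> ftilde d f c M \<sigma>"
    using f_pos[OF sigma_pos sigma_less_one] by (simp add: ftilde_def)
  also have "\<dots> \<le> ftilde d f c M v" using assms sigma_pos by (intro ftilde_mono) auto
  finally show "(c * M - d) * \<sigma> \<le> ftilde d f c M v" .
  have "ftilde d f c M v \<le> ftilde d f c M 1" using assms sigma_pos by (intro ftilde_mono) auto
  then show "ftilde d f c M v \<le> c * M - d" by (simp add: ftilde_def f_one)
qed

lemma conv_extend_right_bounds:
  assumes "admissible \<phi>"
  shows "\<sigma> \<le> conv J (extend_right \<sigma> \<phi>) \<xi>" and "conv J (extend_right \<sigma> \<phi>) \<xi> \<le> 1"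
proof -
  note ext = admissibleD[OF admissible_extend_right[OF assms]]
  have "conv J (\<lambda>_. \<sigma>) \<xi> \<le> conv J (extend_right \<sigma> \<phi>) \<xi>"
    by (rule conv_mono[where B=\<sigma> and B'=1]) (use ext sigma_pos in auto)
  then show "\<sigma> \<le> conv J (extend_right \<sigma> \<phi>) \<xi>" by (simp add: conv_const[OF J_mass])
  have "conv J (extend_right \<sigma> \<phi>) \<xi> \<le> conv J (\<lambda>_. 1) \<xi>"
    by (rule conv_mono[where B=1 and B'=1]) (use ext in auto)
  then show "conv J (extend_right \<sigma> \<phi>) \<xi> \<le> 1" by (simp add: conv_const[OF J_mass])
qed

lemma source_bounds:
  assumes "admissible \<phi>"
  shows "c * M * \<sigma> \<le> source \<phi> \<xi>" and "source \<phi> \<xi> \<le> c * M"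
proof -
  have "d * \<sigma> \<le> d * conv J (extend_right \<sigma> \<phi>) \<xi>" "d * conv J (extend_right \<sigma> \<phi>) \<xi> \<le> d"
    using conv_extend_right_bounds[OF assms, of \<xi>] d_pos by simp_all
  then show "c * M * \<sigma> \<le> source \<phi> \<xi>" "source \<phi> \<xi> \<le> c * M"
    using ftilde_bounds[OF admissibleD(2,3)[OF assms, of \<xi>]]
    unfolding source_def by (simp_all add: algebra_simps)
qed

lemma source_mono:
  assumes "admissible \<phi>" "admissible \<psi>" "\<And>y. \<phi> y \<le> \<psi> y"
  shows "source \<phi> \<xi> \<le> source \<psi> \<xi>"
proof -
  note ext = admissibleD[OF admissible_extend_right[OF assms(1)]]
    admissibleD[OF admissible_extend_right[OF assms(2)]]
  have "conv J (extend_right \<sigma> \<phi>) \<xi> \<le> conv J (extend_right \<sigma> \<psi>) \<xi>"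
    by (rule conv_mono[where B=1 and B'=1]) (use ext assms(3) in \<open>auto simp: extend_right_def\<close>)
  moreover have "ftilde d f c M (\<phi> \<xi>) \<le> ftilde d f c M (\<psi> \<xi>)"
    using admissibleD[OF assms(1)] admissibleD[OF assms(2)] assms(3) sigma_pos
    by (intro ftilde_mono) (auto intro: order_trans less_imp_le)
  ultimately show ?thesis unfolding source_def using d_pos by (simp add: add_mono)
qed

lemma f_comp_measurable:
  assumes [measurable]: "\<phi> \<in> borel_measurable borel" and "\<And>y. 0 \<le> \<phi> y"
  shows "(\<lambda>y. f (\<phi> y)) \<in> borel_measurable borel"
proof -
  have "continuous_on UNIV (\<lambda>v. f (max v 0))"
    by (rule continuous_on_compose2[OF f_continuous]) (auto intro!: continuous_intros)
  then have [measurable]: "(\<lambda>v. f (max v 0)) \<in> borel_measurable borel"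
    by (rule borel_measurable_continuous_onI)
  have "(\<lambda>y. f (max (\<phi> y) 0)) \<in> borel_measurable borel" by measurable
  then show ?thesis using assms(2) by (simp add: max_absorb1)
qed

lemma continuous_on_f_comp:
  assumes "continuous_on UNIV g" "\<And>y. 0 \<le> g y"
  shows "continuous_on UNIV (\<lambda>y. f (g y))"
  by (rule continuous_on_compose2[OF f_continuous assms(1)]) (use assms(2) in auto)

lemma source_measurable:
  assumes "admissible \<phi>" shows "source \<phi> \<in> borel_measurable borel"
proof -
  have [measurable]: "\<phi> \<in> borel_measurable borel" "extend_right \<sigma> \<phi> \<in> borel_measurable borel"
    using admissibleD(1) assms admissible_extend_right by auto
  have [measurable]: "(\<lambda>y. f (\<phi> y)) \<in> borel_measurable borel"
    using admissibleD[OF assms] sigma_pos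
    by (intro f_comp_measurable) (auto intro: order_trans less_imp_le)
  show ?thesis unfolding source_def[abs_def] ftilde_def by measurable
qed

lemma source_tendsto:
  assumes "\<And>n. admissible (\<phi> n)" "admissible \<psi>" and lim: "\<And>y. (\<lambda>n. \<phi> n y) \<longlonglongrightarrow> \<psi> y"
  shows "(\<lambda>n. source (\<phi> n) \<xi>) \<longlonglongrightarrow> source \<psi> \<xi>"
proof -
  have "(\<lambda>n. conv J (extend_right \<sigma> (\<phi> n)) \<xi>) \<longlonglongrightarrow> conv J (extend_right \<sigma> \<psi>) \<xi>"
    using admissibleD[OF admissible_extend_right[OF assms(1)]]
      admissibleD[OF admissible_extend_right[OF assms(2)]]
    by (intro conv_tendsto[where B=1]) (auto simp: extend_right_def lim)
  moreover have "(\<lambda>n. f (\<phi> n \<xi>)) \<longlonglongrightarrow> f (\<psi> \<xi>)"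
    using admissibleD(2)[OF assms(1)] admissibleD(2)[OF assms(2)] sigma_pos
    by (intro continuous_on_tendsto_compose[OF f_continuous lim])
       (auto intro!: always_eventually intro: order_trans less_imp_le)
  ultimately show ?thesis unfolding source_def ftilde_def by (intro tendsto_intros lim)
qed

lemma Aop_eq_sigma: "0 \<le> x \<Longrightarrow> A \<phi> x = \<sigma>"
  by (simp add: Aop_def)

lemma Aop_eq_source:
  assumes "admissible \<phi>" "x < 0"
  shows "A \<phi> x = exp (M * x) * \<sigma>
    + exp (M * x) / c * (LINT \<xi>:{x..0}|lborel. exp (- M * \<xi>) * source \<phi> \<xi>)"
  using conv_extend_right[OF admissibleD(1,4)[OF assms(1)], of \<sigma>] assms(2)
  by (simp add: Aop_def source_def algebra_simps)

lemma weighted_source_bound: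
  assumes "admissible \<phi>" "\<xi> \<in> {x..0}"
  shows "\<bar>exp (- M * \<xi>) * source \<phi> \<xi>\<bar> \<le> exp (- M * x) * (c * M)"
proof -
  have "exp (- M * \<xi>) \<le> exp (- M * x)" using assms(2) M_pos by simp
  moreover have "0 \<le> source \<phi> \<xi>" "source \<phi> \<xi> \<le> c * M"
    using source_bounds[OF assms(1), of \<xi>] c_pos M_pos sigma_pos
    by (auto intro: order_trans[rotated])
  ultimately show ?thesis by (simp add: abs_mult mult_mono)
qed

lemma weighted_source_integrable:
  assumes "admissible \<phi>"
  shows "set_integrable lborel {x..0} (\<lambda>\<xi>. exp (- M * \<xi>) * source \<phi> \<xi>)"
  unfolding set_integrable_def
proof (rule integrableI_bounded_set_indicator[where B="exp (- M * x) * (c * M)"])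
  have [measurable]: "source \<phi> \<in> borel_measurable borel" by (rule source_measurable[OF assms])
  show "(\<lambda>\<xi>. exp (- M * \<xi>) * source \<phi> \<xi>) \<in> borel_measurable lborel" by measurable
  show "emeasure lborel {x..0} < \<infinity>" by (rule emeasure_bounded_finite) simp
  show "AE \<xi> in lborel. \<xi> \<in> {x..0} \<longrightarrow> norm (exp (- M * \<xi>) * source \<phi> \<xi>) \<le> exp (- M * x) * (c * M)"
    using weighted_source_bound[OF assms] by auto
qed simp

lemma Aop_eq_comparison:
  assumes \<phi>: "admissible \<phi>" and x: "x < 0"
    and \<psi>: "continuous_on {x..0} \<psi>" "continuous_on {x..0} \<psi>'"
    and deriv: "\<And>\<xi>. x < \<xi> \<Longrightarrow> \<xi> < 0 \<Longrightarrow> (\<psi> has_real_derivative \<psi>' \<xi>) (at \<xi>)"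
  defines "defect \<equiv> \<lambda>\<xi>. exp (- M * \<xi>) * (source \<phi> \<xi> - c * (M * \<psi> \<xi> - \<psi>' \<xi>))"
  shows "set_integrable lborel {x..0} defect"
    and "A \<phi> x = \<psi> x + exp (M * x) * (\<sigma> - \<psi> 0) + exp (M * x) / c * (LINT \<xi>:{x..0}|lborel. defect \<xi>)"
proof -
  note W = exp_weighted_derivative_integral[of x 0 \<psi> \<psi>' M, OF _ \<psi> deriv]
  have defect_eq: "defect = (\<lambda>\<xi>. exp (- M * \<xi>) * source \<phi> \<xi>
      - c * (exp (- M * \<xi>) * (M * \<psi> \<xi> - \<psi>' \<xi>)))"
    by (simp add: defect_def fun_eq_iff algebra_simps)
  note diff = set_integral_diff[OF weighted_source_integrable[OF \<phi>]
      set_integrable_mult_right[OF W(1)], of c]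
  show "set_integrable lborel {x..0} defect" using diff(1) x by (simp add: defect_eq)
  have "(LINT \<xi>:{x..0}|lborel. exp (- M * \<xi>) * source \<phi> \<xi>)
      = (LINT \<xi>:{x..0}|lborel. defect \<xi>) + c * (exp (- M * x) * \<psi> x - \<psi> 0)"
    using diff(2) W(2) x by (simp add: defect_eq)
  then show "A \<phi> x = \<psi> x + exp (M * x) * (\<sigma> - \<psi> 0)
      + exp (M * x) / c * (LINT \<xi>:{x..0}|lborel. defect \<xi>)"
    using Aop_eq_source[OF \<phi> x] c_pos by (simp add: exp_minus field_simps)
qed

lemma Aop_le_supersolution:
  assumes \<phi>: "admissible \<phi>" and x: "x < 0"
    and \<psi>: "continuous_on {x..0} \<psi>" "continuous_on {x..0} \<psi>'"
    and deriv: "\<And>\<xi>. x < \<xi> \<Longrightarrow> \<xi> < 0 \<Longrightarrow> (\<psi> has_real_derivative \<psi>' \<xi>) (at \<xi>)"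
    and super: "\<And>\<xi>. x \<le> \<xi> \<Longrightarrow> \<xi> < 0 \<Longrightarrow> source \<phi> \<xi> \<le> c * (M * \<psi> \<xi> - \<psi>' \<xi>)"
  shows "A \<phi> x \<le> \<psi> x + exp (M * x) * (\<sigma> - \<psi> 0)"
proof -
  note comparison = Aop_eq_comparison[OF \<phi> x \<psi> deriv]
  have "(LINT \<xi>:{x..0}|lborel. exp (- M * \<xi>) * (source \<phi> \<xi> - c * (M * \<psi> \<xi> - \<psi>' \<xi>)))
      \<le> (LINT \<xi>:{x..0}|lborel. 0)"
    by (rule set_integral_mono_AE[OF comparison(1)])
       (use AE_lborel_singleton[of 0] in \<open>auto simp: set_integrable_def mult_nonneg_nonpos super\<close>)
  then show ?thesis using comparison(2) c_pos by (simp add: mult_nonneg_nonpos divide_nonpos_pos)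
qed

lemma Aop_ge_subsolution:
  assumes \<phi>: "admissible \<phi>" and x: "x < 0"
    and \<psi>: "continuous_on {x..0} \<psi>" "continuous_on {x..0} \<psi>'"
    and deriv: "\<And>\<xi>. x < \<xi> \<Longrightarrow> \<xi> < 0 \<Longrightarrow> (\<psi> has_real_derivative \<psi>' \<xi>) (at \<xi>)"
    and sub: "\<And>\<xi>. x \<le> \<xi> \<Longrightarrow> \<xi> < 0 \<Longrightarrow> c * (M * \<psi> \<xi> - \<psi>' \<xi>) \<le> source \<phi> \<xi>"
  shows "\<psi> x + exp (M * x) * (\<sigma> - \<psi> 0) \<le> A \<phi> x"
proof -
  note comparison = Aop_eq_comparison[OF \<phi> x \<psi> deriv]
  have "(LINT \<xi>:{x..0}|lborel. 0)
      \<le> (LINT \<xi>:{x..0}|lborel. exp (- M * \<xi>) * (source \<phi> \<xi> - c * (M * \<psi> \<xi> - \<psi>' \<xi>)))"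
    by (rule set_integral_mono_AE[OF _ comparison(1)])
       (use AE_lborel_singleton[of 0] in \<open>auto simp: set_integrable_def sub\<close>)
  then show ?thesis using comparison(2) c_pos by simp
qed

lemma Aop_bounds:
  assumes \<phi>: "admissible \<phi>" shows "\<sigma> \<le> A \<phi> x" and "A \<phi> x \<le> 1"
proof -
  have "\<sigma> \<le> A \<phi> x \<and> A \<phi> x \<le> 1"
  proof (cases "0 \<le> x")
    case True then show ?thesis using Aop_eq_sigma sigma_less_one by simp
  next
    case False
    then have x: "x < 0" by simp
    have "A \<phi> x \<le> 1 + exp (M * x) * (\<sigma> - 1)"
      by (rule Aop_le_supersolution[OF \<phi> x, where \<psi>'="\<lambda>_. 0"])
         (use source_bounds[OF \<phi>] in \<open>auto simp: mult.assoc\<close>)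
    moreover have "\<sigma> + exp (M * x) * (\<sigma> - \<sigma>) \<le> A \<phi> x"
      by (rule Aop_ge_subsolution[OF \<phi> x, where \<psi>'="\<lambda>_. 0"])
         (use source_bounds[OF \<phi>] in \<open>auto simp: mult.assoc\<close>)
    moreover have "exp (M * x) * (\<sigma> - 1) \<le> 0" using sigma_less_one by (simp add: mult_nonneg_nonpos)
    ultimately show ?thesis by simp
  qed
  then show "\<sigma> \<le> A \<phi> x" "A \<phi> x \<le> 1" by auto
qed

lemma Aop_mono:
  assumes "admissible \<phi>" "admissible \<psi>" "\<And>y. \<phi> y \<le> \<psi> y"
  shows "A \<phi> x \<le> A \<psi> x"
proof (cases "0 \<le> x")
  case True then show ?thesis by (simp add: Aop_eq_sigma)
next
  case False
  have "(LINT \<xi>:{x..0}|lborel. exp (- M * \<xi>) * source \<phi> \<xi>)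
      \<le> (LINT \<xi>:{x..0}|lborel. exp (- M * \<xi>) * source \<psi> \<xi>)"
    using assms
    by (intro set_integral_mono weighted_source_integrable mult_left_mono source_mono) auto
  then show ?thesis using False c_pos by (simp add: Aop_eq_source assms divide_right_mono)
qed

lemma Aop_continuous:
  assumes \<phi>: "admissible \<phi>" shows "continuous_on UNIV (A \<phi>)"
proof -
  let ?g = "\<lambda>\<xi>. exp (- M * \<xi>) * source \<phi> \<xi>"
  let ?F = "\<lambda>x. exp (M * x) * \<sigma> + exp (M * x) / c * integral {x..0} ?g"
  have A_eq: "A \<phi> x = ?F (min x 0)" for x
    using Aop_eq_source[OF \<phi>] set_borel_integral_eq_integral(2)[OF weighted_source_integrable[OF \<phi>]]
    by (cases "0 \<le> x") (auto simp: Aop_eq_sigma min_def)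
  have "isCont (A \<phi>) x0" for x0
  proof -
    define a where "a = min x0 0 - 1"
    have "continuous_on {a..0} (\<lambda>x. integral {x..0} ?g)"
      using set_borel_integral_eq_integral(1)[OF weighted_source_integrable[OF \<phi>]]
      by (rule indefinite_integral_continuous_1')
    then have "continuous_on {a..0} ?F" using c_pos by (intro continuous_intros) auto
    then have "continuous_on {a<..} (\<lambda>x. ?F (min x 0))"
      by (rule continuous_on_compose2) (auto simp: a_def intro!: continuous_intros)
    then have "continuous_on {a<..} (A \<phi>)" by (simp add: A_eq)
    then show ?thesis by (rule continuous_on_interior) (auto simp: a_def interior_open)
  qed
  then show ?thesis by (simp add: continuous_on_eq_continuous_at)
qed

lemma admissible_Aop: "admissible \<phi> \<Longrightarrow> admissible (A \<phi>)"
  using Aop_bounds Aop_continuous borel_measurable_continuous_onI unfolding admissible_def by blast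

lemma Aop_tendsto:
  assumes \<phi>: "\<And>n. admissible (\<phi> n)" and \<psi>: "admissible \<psi>" and lim: "\<And>y. (\<lambda>n. \<phi> n y) \<longlonglongrightarrow> \<psi> y"
  shows "(\<lambda>n. A (\<phi> n) x) \<longlonglongrightarrow> A \<psi> x"
proof (cases "0 \<le> x")
  case True then show ?thesis by (simp add: Aop_eq_sigma)
next
  case False
  have [measurable]: "source \<psi> \<in> borel_measurable borel" "\<And>n. source (\<phi> n) \<in> borel_measurable borel"
    using source_measurable \<phi> \<psi> by auto
  have "(\<lambda>n. LINT \<xi>:{x..0}|lborel. exp (- M * \<xi>) * source (\<phi> n) \<xi>)
      \<longlonglongrightarrow> (LINT \<xi>:{x..0}|lborel. exp (- M * \<xi>) * source \<psi> \<xi>)"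
    unfolding set_lebesgue_integral_def
  proof (rule integral_dominated_convergence
      [where w="\<lambda>\<xi>. indicator {x..0} \<xi> * (exp (- M * x) * (c * M))"])
    show "integrable lborel (\<lambda>\<xi>. indicator {x..0} \<xi> * (exp (- M * x) * (c * M)))"
      using emeasure_bounded_finite[of "{x..0}"]
      by (intro integrable_mult_left integrable_real_indicator) auto
    show "AE \<xi> in lborel. (\<lambda>n. indicator {x..0} \<xi> *\<^sub>R (exp (- M * \<xi>) * source (\<phi> n) \<xi>))
        \<longlonglongrightarrow> indicator {x..0} \<xi> *\<^sub>R (exp (- M * \<xi>) * source \<psi> \<xi>)"
      by (intro AE_I2 tendsto_intros source_tendsto \<phi> \<psi> lim)
    show "AE \<xi> in lborel. norm (indicator {x..0} \<xi> *\<^sub>R (exp (- M * \<xi>) * source (\<phi> n) \<xi>))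
        \<le> indicator {x..0} \<xi> * (exp (- M * x) * (c * M))" for n
      using weighted_source_bound[OF \<phi>] by (intro AE_I2) (simp add: indicator_def)
  qed measurable
  then show ?thesis
    using False c_pos by (simp add: Aop_eq_source \<phi> \<psi>) (intro tendsto_intros, auto)
qed

lemma Aop_le_if_supersolution:
  assumes v: "admissible v" "continuous_on UNIV v" "continuous_on UNIV v'"
    and deriv: "\<And>\<xi>. \<xi> < 0 \<Longrightarrow> (v has_real_derivative v' \<xi>) (at \<xi>)"
    and super: "\<And>\<xi>. \<xi> < 0 \<Longrightarrow> source v \<xi> \<le> c * (M * v \<xi> - v' \<xi>)"
  shows "A v x \<le> v x"
proof (cases "0 \<le> x")
  case True then show ?thesis using Aop_eq_sigma admissibleD(2)[OF v(1)] by simp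
next
  case False
  then have "A v x \<le> v x + exp (M * x) * (\<sigma> - v 0)"
    by (intro Aop_le_supersolution[OF v(1) _ continuous_on_subset[OF v(2)]
          continuous_on_subset[OF v(3)]])
       (use deriv super in auto)
  moreover have "exp (M * x) * (\<sigma> - v 0) \<le> 0"
    using admissibleD(2)[OF v(1), of 0] by (simp add: mult_nonneg_nonpos)
  ultimately show ?thesis by simp
qed

end

section \<open>The monotone iteration\<close>

locale monotone_iteration = truncated_problem +
  fixes \<phi>0 :: "real \<Rightarrow> real"
  assumes admissible_start: "admissible \<phi>0" and antimono_start: "antimono \<phi>0"
    and start_le_Aop: "\<And>x. \<phi>0 x \<le> A \<phi>0 x"
begin

definition iterate :: "nat \<Rightarrow> real \<Rightarrow> real" where
  "iterate n = (A ^^ n) \<phi>0"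

definition limit :: "real \<Rightarrow> real" where
  "limit x = lim (\<lambda>n. iterate n x)"

lemma iterate_Suc: "iterate (Suc n) = A (iterate n)"
  by (simp add: iterate_def)

lemma admissible_iterate: "admissible (iterate n)"
  by (induction n) (simp_all add: iterate_def admissible_start admissible_Aop)

lemma iterate_le_Suc: "iterate n x \<le> iterate (Suc n) x"
proof (induction n arbitrary: x)
  case 0
  then show ?case using start_le_Aop by (simp add: iterate_def)
next
  case (Suc n)
  then show ?case
    unfolding iterate_Suc[of "Suc n"]
    by (simp add: iterate_Suc Aop_mono admissible_iterate admissible_Aop)
qed

lemma iterate_tendsto_limit: "(\<lambda>n. iterate n x) \<longlonglongrightarrow> limit x"
proof -
  have "incseq (\<lambda>n. iterate n x)" using iterate_le_Suc by (simp add: incseq_SucI)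
  moreover have "bdd_above (range (\<lambda>n. iterate n x))"
    using admissibleD(3)[OF admissible_iterate] by (auto intro!: bdd_aboveI[where M=1])
  ultimately have "convergent (\<lambda>n. iterate n x)"
    using LIMSEQ_incseq_SUP convergent_def by blast
  then show ?thesis unfolding limit_def by (rule convergent_LIMSEQ_iff[THEN iffD1])
qed

lemma iterate_le_limit: "iterate n x \<le> limit x"
  using iterate_le_Suc by (intro incseq_le[OF _ iterate_tendsto_limit]) (simp add: incseq_SucI)

lemma start_le_limit: "\<phi>0 x \<le> limit x"
  using iterate_le_limit[of 0] by (simp add: iterate_def)

lemma admissible_limit: "admissible limit"
proof -
  have "limit \<in> borel_measurable borel"
    using admissibleD(1)[OF admissible_iterate]
    by (rule borel_measurable_LIMSEQ_real[OF iterate_tendsto_limit])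
  moreover have "\<sigma> \<le> limit x" for x
    using admissibleD(2)[OF admissible_start] start_le_limit order_trans by blast
  moreover have "limit x \<le> 1" for x
    using admissibleD(3)[OF admissible_iterate]
    by (intro LIMSEQ_le_const2[OF iterate_tendsto_limit]) auto
  ultimately show ?thesis unfolding admissible_def by auto
qed

lemma Aop_limit: "A limit = limit"
proof
  fix x
  have "(\<lambda>n. A (iterate n) x) \<longlonglongrightarrow> A limit x"
    by (rule Aop_tendsto[OF admissible_iterate admissible_limit iterate_tendsto_limit])
  moreover have "(\<lambda>n. A (iterate n) x) \<longlonglongrightarrow> limit x"
    using LIMSEQ_Suc[OF iterate_tendsto_limit[of x]] by (simp add: iterate_Suc)
  ultimately show "A limit x = limit x" by (rule LIMSEQ_unique)
qed

lemma limit_le_supersolution: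
  assumes v: "admissible v" and "\<And>x. \<phi>0 x \<le> v x" and "\<And>x. A v x \<le> v x"
  shows "limit x \<le> v x"
proof -
  have "iterate n y \<le> v y" for n y
  proof (induction n arbitrary: y)
    case 0
    then show ?case using assms(2) by (simp add: iterate_def)
  next
    case (Suc n)
    have "A (iterate n) y \<le> A v y" by (rule Aop_mono[OF admissible_iterate v]) (use Suc in auto)
    then show ?case using assms(3)[of y] by (simp add: iterate_Suc)
  qed
  then show ?thesis by (intro LIMSEQ_le_const2[OF iterate_tendsto_limit]) auto
qed

lemma limit_eq_sigma: "0 \<le> x \<Longrightarrow> limit x = \<sigma>"
  using Aop_limit Aop_eq_sigma by metis

lemma extend_right_limit: "extend_right \<sigma> limit = limit"
  using limit_eq_sigma by (auto simp: extend_right_def fun_eq_iff)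

lemma limit_continuous: "continuous_on UNIV limit"
  using Aop_continuous[OF admissible_limit] by (simp add: Aop_limit)

lemma source_limit_continuous: "continuous_on UNIV (source limit)"
proof -
  have "continuous_on UNIV (\<lambda>\<xi>. d * conv J limit \<xi> + ((c * M - d) * limit \<xi> + f (limit \<xi>)))"
    using admissibleD[OF admissible_limit] sigma_pos
    by (intro continuous_intros conv_continuous limit_continuous continuous_on_f_comp)
       (auto intro: order_trans less_imp_le)
  then show ?thesis by (simp add: source_def[abs_def] extend_right_limit ftilde_def)
qed

definition limit_slope :: "real \<Rightarrow> real" where
  "limit_slope \<xi> = M * limit \<xi> - source limit \<xi> / c"

lemma limit_slope_continuous: "continuous_on UNIV limit_slope"
  unfolding limit_slope_def[abs_def] using c_pos
  by (intro continuous_intros limit_continuous source_limit_continuous) auto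

lemma limit_equation: "c * limit_slope \<xi> = - (d * conv J limit \<xi> - d * limit \<xi> + f (limit \<xi>))"
  using c_pos by (simp add: limit_slope_def source_def extend_right_limit ftilde_def field_simps)

lemma limit_has_derivative:
  assumes "x < 0" shows "(limit has_real_derivative limit_slope x) (at x)"
proof -
  let ?g = "\<lambda>\<xi>. exp (- M * \<xi>) * source limit \<xi>"
  let ?F = "\<lambda>y. exp (M * y) * \<sigma> + exp (M * y) / c * integral {y..0} ?g"
  have limit_eq: "limit y = ?F y" if "y < 0" for y
    using Aop_eq_source[OF admissible_limit that] Aop_limit
      set_borel_integral_eq_integral(2)[OF weighted_source_integrable[OF admissible_limit]]
    by simp
  have "((\<lambda>y. integral {y..0} ?g) has_real_derivative - ?g x) (at x within {x - 1..0})"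
    using assms by (intro integral_has_real_derivative' continuous_intros source_limit_continuous
        continuous_on_subset[OF source_limit_continuous]) auto
  moreover have "at x within {x - 1..0} = at x"
    using assms by (intro at_within_interior) auto
  ultimately have "(?F has_real_derivative M * ?F x - exp (M * x) * ?g x / c) (at x)"
    using c_pos by (auto intro!: derivative_eq_intros simp: field_simps)
  then have "(limit has_real_derivative M * ?F x - exp (M * x) * ?g x / c) (at x)"
    by (rule has_field_derivative_transform_within_open[of _ _ _ "{..<0}"])
       (use assms limit_eq in auto)
  moreover have "M * ?F x - exp (M * x) * ?g x / c = limit_slope x"
    using limit_eq[OF assms] by (simp add: limit_slope_def exp_minus)
  ultimately show ?thesis by simp
qed

lemma limit_translate_le:
  assumes "0 < h" shows "limit x \<le> limit (x - h)"
proof -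
  define v where "v = (\<lambda>y. limit (y - h))"
  have v: "continuous_on UNIV v"
    unfolding v_def
    by (rule continuous_on_compose2[OF limit_continuous]) (auto intro!: continuous_intros)
  have admissible_v: "admissible v"
    using admissibleD[OF admissible_limit] borel_measurable_continuous_onI[OF v]
    by (auto simp: admissible_def v_def)
  have "A v y \<le> v y" for y
  proof (rule Aop_le_if_supersolution[OF admissible_v v, where v'="\<lambda>\<xi>. limit_slope (\<xi> - h)"])
    show "continuous_on UNIV (\<lambda>\<xi>. limit_slope (\<xi> - h))"
      by (rule continuous_on_compose2[OF limit_slope_continuous]) (auto intro!: continuous_intros)
    fix \<xi> :: real assume "\<xi> < 0"
    then show "(v has_real_derivative limit_slope (\<xi> - h)) (at \<xi>)"
      using limit_has_derivative[of "\<xi> - h"] \<open>0 < h\<close> DERIV_shift[of limit _ \<xi> "- h"]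
      by (simp add: v_def)
    have "conv J (extend_right \<sigma> v) \<xi> \<le> conv J v \<xi>"
      using admissibleD[OF admissible_v] admissibleD[OF admissible_extend_right[OF admissible_v]]
      by (intro conv_mono[where B=1 and B'=1]) (auto simp: extend_right_def)
    also have "conv J v \<xi> = conv J limit (\<xi> - h)"
      unfolding v_def by (rule conv_translate)
    finally have "d * conv J (extend_right \<sigma> v) \<xi> \<le> d * conv J limit (\<xi> - h)"
      using d_pos by simp
    then show "source v \<xi> \<le> c * (M * v \<xi> - limit_slope (\<xi> - h))"
      using limit_equation[of "\<xi> - h"] by (simp add: source_def ftilde_def v_def algebra_simps)
  qed
  moreover have "\<phi>0 y \<le> v y" for y
    using antimono_start[THEN antimonoD, of "y - h" y] start_le_limit[of "y - h"] \<open>0 < h\<close>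
    by (simp add: v_def)
  ultimately show "limit x \<le> limit (x - h)"
    using limit_le_supersolution[OF admissible_v] by (simp add: v_def)
qed

lemma antimono_limit: "antimono limit"
proof (rule antimonoI)
  fix x y :: real assume "x \<le> y"
  then show "limit y \<le> limit x"
    using limit_translate_le[of "y - x" y] by (cases "x = y") auto
qed

lemma limit_slope_nonpos: "\<xi> < 0 \<Longrightarrow> limit_slope \<xi> \<le> 0"
  using antimono_has_real_derivative_nonpos[OF antimono_limit limit_has_derivative] .

lemma Aop_faster_le_limit:
  assumes "truncated_problem J d f c' M' \<sigma>" and "c \<le> c'"
  shows "Aop d J f c' M' \<sigma> limit x \<le> limit x"
proof -
  interpret faster: truncated_problem J d f c' M' \<sigma> by (rule assms(1))
  show ?thesis
  proof (rule faster.Aop_le_if_supersolution[OF admissible_limit limit_continuous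
        limit_slope_continuous limit_has_derivative])
    fix \<xi> :: real assume "\<xi> < 0"
    then have "c' * limit_slope \<xi> \<le> c * limit_slope \<xi>"
      using limit_slope_nonpos assms(2) by (simp add: mult_right_mono_neg)
    then show "faster.source limit \<xi> \<le> c' * (M' * limit \<xi> - limit_slope \<xi>)"
      using limit_equation[of \<xi>]
      by (simp add: faster.source_def extend_right_limit ftilde_def algebra_simps)
  qed
qed

end

section \<open>Starting from the traveling wave\<close>

context truncated_problem
begin

lemma is_TW_derivative:
  assumes wave: "is_TW d J f cs \<psi>" and "0 < cs"
  obtains \<psi>' where "continuous_on UNIV \<psi>'" and "\<And>x. (\<psi> has_real_derivative \<psi>' x) (at x)"
    and "\<And>x. \<psi>' x \<le> 0" and "\<And>x. cs * \<psi>' x = - (d * conv J \<psi> x - d * \<psi> x + f (\<psi> x))"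
proof -
  obtain \<psi>' where deriv: "\<And>x. (\<psi> has_real_derivative \<psi>' x) (at x)"
    and equation: "\<And>x. d * conv J \<psi> x - d * \<psi> x + cs * \<psi>' x + f (\<psi> x) = 0"
    using wave unfolding is_TW_def conv_def by blast
  have slope: "\<psi>' = (\<lambda>x. - (d * conv J \<psi> x - d * \<psi> x + f (\<psi> x)) / cs)"
    using equation \<open>0 < cs\<close> by (auto simp: fun_eq_iff field_simps add_eq_0_iff)
  have "\<bar>\<psi> y\<bar> \<le> 1" for y using is_TW_bounds[OF wave, of y] by simp
  then have "continuous_on UNIV \<psi>'"
    unfolding slope using \<open>0 < cs\<close> is_TW_bounds(1)[OF wave]
    by (intro continuous_intros conv_continuous is_TW_continuous[OF wave] continuous_on_f_comp) auto
  moreover have "\<psi>' x \<le> 0" for x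
    using antimono_has_real_derivative_nonpos[OF _ deriv] wave by (simp add: is_TW_def)
  moreover have "cs * \<psi>' x = - (d * conv J \<psi> x - d * \<psi> x + f (\<psi> x))" for x
    using equation[of x] by simp
  ultimately show ?thesis using that deriv by blast
qed

lemma admissible_wave_max:
  assumes "is_TW d J f cs \<psi>" shows "admissible (\<lambda>y. max (\<psi> y) \<sigma>)"
proof -
  have [measurable]: "\<psi> \<in> borel_measurable borel"
    using is_TW_continuous[OF assms] by (rule borel_measurable_continuous_onI)
  show ?thesis using is_TW_bounds[OF assms] sigma_less_one by (auto simp: admissible_def)
qed

lemma wave_max_le_Aop:
  assumes wave: "is_TW d J f cs \<psi>" and "c < cs" and "\<psi> 0 = \<sigma>"
  shows "max (\<psi> x) \<sigma> \<le> A (\<lambda>y. max (\<psi> y) \<sigma>) x"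
proof -
  let ?\<phi>0 = "\<lambda>y. max (\<psi> y) \<sigma>"
  have [measurable]: "\<psi> \<in> borel_measurable borel"
    using is_TW_continuous[OF wave] by (rule borel_measurable_continuous_onI)
  obtain \<psi>' where \<psi>': "continuous_on UNIV \<psi>'" and deriv: "\<And>x. (\<psi> has_real_derivative \<psi>' x) (at x)"
    and nonpos: "\<And>x. \<psi>' x \<le> 0"
    and equation: "\<And>x. cs * \<psi>' x = - (d * conv J \<psi> x - d * \<psi> x + f (\<psi> x))"
    using is_TW_derivative[OF wave] c_pos \<open>c < cs\<close> by auto
  have anti: "antimono \<psi>" using wave by (simp add: is_TW_def)
  have \<psi>_sigma: "\<psi> y \<le> \<sigma>" if "0 \<le> y" for y
    using anti[THEN antimonoD, OF that] \<open>\<psi> 0 = \<sigma>\<close> by simp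
  have sigma_\<psi>: "\<sigma> \<le> \<psi> y" if "y \<le> 0" for y
    using anti[THEN antimonoD, OF that] \<open>\<psi> 0 = \<sigma>\<close> by simp
  show ?thesis
  proof (cases "0 \<le> x")
    case True
    then show ?thesis using \<psi>_sigma by (simp add: Aop_eq_sigma)
  next
    case False
    then have x: "x < 0" by simp
    have "\<psi> x + exp (M * x) * (\<sigma> - \<psi> 0) \<le> A ?\<phi>0 x"
    proof (rule Aop_ge_subsolution[OF admissible_wave_max[OF wave] x
          continuous_on_subset[OF is_TW_continuous[OF wave]] continuous_on_subset[OF \<psi>']])
      fix \<xi> :: real assume \<xi>: "x \<le> \<xi>" "\<xi> < 0"
      have "conv J \<psi> \<xi> \<le> conv J (extend_right \<sigma> ?\<phi>0) \<xi>"
        using is_TW_bounds[OF wave] \<psi>_sigma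
          admissibleD[OF admissible_extend_right[OF admissible_wave_max[OF wave]]]
        by (intro conv_mono[where B=1 and B'=1]) (auto simp: extend_right_def)
      then have "d * conv J \<psi> \<xi> \<le> d * conv J (extend_right \<sigma> ?\<phi>0) \<xi>"
        using d_pos by simp
      moreover have "cs * \<psi>' \<xi> \<le> c * \<psi>' \<xi>"
        using nonpos[of \<xi>] \<open>c < cs\<close> by (simp add: mult_right_mono_neg)
      ultimately show "c * (M * \<psi> \<xi> - \<psi>' \<xi>) \<le> source ?\<phi>0 \<xi>"
        using equation[of \<xi>] sigma_\<psi>[of \<xi>] \<xi>
        by (simp add: source_def ftilde_def algebra_simps max_absorb1)
    qed (use deriv in auto)
    then show ?thesis using \<open>\<psi> 0 = \<sigma>\<close> sigma_\<psi>[of x] x by simp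
  qed
qed

lemma monotone_iteration_from_wave:
  assumes wave: "is_TW d J f cs \<psi>" and "c < cs" and "\<psi> 0 = \<sigma>"
  shows "monotone_iteration J d f c M \<sigma> (\<lambda>y. max (\<psi> y) \<sigma>)"
proof (intro monotone_iteration.intro monotone_iteration_axioms.intro)
  show "truncated_problem J d f c M \<sigma>" by (rule truncated_problem_axioms)
  show "admissible (\<lambda>y. max (\<psi> y) \<sigma>)" by (rule admissible_wave_max[OF wave])
  have anti: "antimono \<psi>" using wave by (simp add: is_TW_def)
  show "antimono (\<lambda>y. max (\<psi> y) \<sigma>)"
    by (intro antimonoI max.mono antimonoD[OF anti] order_refl)
  show "max (\<psi> x) \<sigma> \<le> A (\<lambda>y. max (\<psi> y) \<sigma>) x" for x
    by (rule wave_max_le_Aop[OF assms])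
qed

end

lemma truncated_problem_if_conditions:
  assumes "0 < d" "cond_J J" "cond_f3 f" "0 < c" "0 < M" "strict_mono_on {0..1} (ftilde d f c M)"
    and "0 < \<sigma>" "\<sigma> < 1"
  shows "truncated_problem J d f c M \<sigma>"
proof -
  obtain f' where f': "\<And>v. 0 \<le> v \<Longrightarrow> (f has_real_derivative f' v) (at v within {0..})"
    using assms(3) unfolding cond_f3_def by blast
  have "continuous_on {0..} f"
    unfolding continuous_on_eq_continuous_within using DERIV_continuous[OF f'] by auto
  then show ?thesis
    using assms nonneg_kernel_if_cond_J[OF assms(2)]
    unfolding truncated_problem_def truncated_problem_axioms_def
    by (auto simp: cond_J_def cond_f3_def)
qed

theorem lemma2p3:
  fixes d c1 c2 M1 M2 :: real and J f :: "real \<Rightarrow> real" and \<Phi> :: "real \<Rightarrow> real \<Rightarrow> real"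
  assumes "d > 0" and "cond_J J" and "cond_J2 J" and "cond_f3 f"
    and "0 < c1" and "c1 < c2" and "c2 < cstar d J f"
    and "M1 > 0" and "strict_mono_on {0..1} (ftilde d f c1 M1)"
    and "M2 > 0" and "strict_mono_on {0..1} (ftilde d f c2 M2)"
    and "\<And>\<sigma>. 0 < \<sigma> \<Longrightarrow> \<sigma> < 1 \<Longrightarrow> is_TW d J f (cstar d J f) (\<Phi> \<sigma>) \<and> \<Phi> \<sigma> 0 = \<sigma>"
  shows "\<exists>\<delta>0. 0 < \<delta>0 \<and> \<delta>0 \<le> 1 \<and> (\<forall>\<sigma>. 0 < \<sigma> \<and> \<sigma> < \<delta>0 \<longrightarrow>
            (\<forall>x. phi_iter d J f c1 M1 \<sigma> (\<Phi> \<sigma>) x \<ge> phi_iter d J f c2 M2 \<sigma> (\<Phi> \<sigma>) x))"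
proof (intro exI[of _ 1] conjI allI impI)
  fix \<sigma> x :: real assume \<sigma>: "0 < \<sigma> \<and> \<sigma> < 1"
  have wave: "is_TW d J f (cstar d J f) (\<Phi> \<sigma>)" "\<Phi> \<sigma> 0 = \<sigma>" using assms(12) \<sigma> by auto
  have slow_problem: "truncated_problem J d f c1 M1 \<sigma>"
    and fast_problem: "truncated_problem J d f c2 M2 \<sigma>"
    using truncated_problem_if_conditions assms \<sigma> by auto
  interpret slow: monotone_iteration J d f c1 M1 \<sigma> "\<lambda>y. max (\<Phi> \<sigma> y) \<sigma>"
    using truncated_problem.monotone_iteration_from_wave[OF slow_problem wave(1) _ wave(2)]
      assms(6,7) by simp
  interpret fast: monotone_iteration J d f c2 M2 \<sigma> "\<lambda>y. max (\<Phi> \<sigma> y) \<sigma>"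
    using truncated_problem.monotone_iteration_from_wave[OF fast_problem wave(1) assms(7) wave(2)] .
  have "fast.limit x \<le> slow.limit x"
    using fast.limit_le_supersolution[OF slow.admissible_limit slow.start_le_limit
        slow.Aop_faster_le_limit[OF fast_problem]] assms(6) by simp
  then show "phi_iter d J f c2 M2 \<sigma> (\<Phi> \<sigma>) x \<le> phi_iter d J f c1 M1 \<sigma> (\<Phi> \<sigma>) x"
    by (simp add: phi_iter_def slow.limit_def fast.limit_def slow.iterate_def fast.iterate_def)
qed simp_all

end
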